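(* Given any three spin-decorated horospheres $(\mathfrak{h}_n,W_n)$ in $\mathcal{H}^4$, $n=1,2,3$, let $\lambda_{mn}$ denote the lambda length from $(\mathfrak{h}_m,W_m)$ to $(\mathfrak{h}_n,W_n)$. Then $\lambda_{12}\lambda_{32}^{-1}\lambda_{31}\in\mathcal{V}\cup\{\infty\}$, where $\mathcal{V}=\mathrm{span}_\mathbb{R}\{1,i,j\}\subset\mathbb{H}$.
   Context: $\mathcal{H}^4$ is oriented hyperbolic 4-space (in the upper half-space model $(\partial_w,\partial_x,\partial_y,\partial_z)$ is positive). A horosphere is $\{x\in\mathcal{H}^4:\langle x,p\rangle=1\}$ in the hyperboloid model, $p$ future lightlike. A decoration on a horosphere is a pair of perpendicular, parallel, oriented tangent line fields with unit fields $v^i,v^j$; with inward normal $N^{in}$ (away from the centre) and outward normal $N^{out}=-N^{in}$ the inward/outward frame fields are the oriented orthonormal frames $(v^{1,in},v^i,v^j,N^{in})$, $(v^{1,out},v^i,v^j,N^{out})$. A spin decoration is a pair $(W^{in},W^{out})$ of continuous lifts of these to the spin double cover of the frame bundle, $W^{in}$ being obtained from $W^{out}$ by rotation through $\pi$ in the plane orthogonal to $v^i,v^j$ from $N^{out}$ towards $v^{1,out}$. Lambda length from $(\mathfrak{h}_1,W_1)$ to $(\mathfrak{h}_2,W_2)$: $0$ if the centres coincide; otherwise with $\gamma$ the oriented geodesic from the centre of $\mathfrak{h}_1$ to that of $\mathfrak{h}_2$ and $p_m=\gamma\cap\mathfrak{h}_m$, translate $W_1^{in}(p_1)$ along $\gamma$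 by signed distance $\rho$ and then rotate by $\theta\in\mathbb{R}/4\pi\mathbb{Z}$ in the 3-plane orthogonal to $\gamma$ at $p_2$ (oriented so that a basis followed by the tangent of $\gamma$ is positive; right-handed angle) about the axis directed by a unit vector whose coordinates $v\in\mathcal{V}$ are taken w.r.t. the first three frame vectors identified with $1,i,j$, to reach $W_2^{out}(p_2)$; then $\lambda_{12}=\exp((\rho+\theta vk)/2)$. *)

theory Defs
  imports "HOL-Analysis.Analysis"
begin

datatype quat = Quat (qre: real) (qi: real) (qj: real) (qk: real)

definition qmul :: "quat \<Rightarrow> quat \<Rightarrow> quat" where
  "qmul p q = Quat
     (qre p * qre q - qi p * qi q - qj p * qj q - qk p * qk q)
     (qre p * qi q + qi p * qre q + qj p * qk q - qk p * qj q)
     (qre p * qj q - qi p * qk q + qj p * qre q + qk p * qi q)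
     (qre p * qk q + qi p * qj q - qj p * qi q + qk p * qre q)"

definition qnorm2 :: "quat \<Rightarrow> real" where
  "qnorm2 q = qre q ^ 2 + qi q ^ 2 + qj q ^ 2 + qk q ^ 2"

definition qinv :: "quat \<Rightarrow> quat" where
  "qinv q = Quat (qre q / qnorm2 q) (- qi q / qnorm2 q) (- qj q / qnorm2 q) (- qk q / qnorm2 q)"

definition qadd :: "quat \<Rightarrow> quat \<Rightarrow> quat" where
  "qadd p q = Quat (qre p + qre q) (qi p + qi q) (qj p + qj q) (qk p + qk q)"

definition qzero :: quat where "qzero = Quat 0 0 0 0"

definition qexp :: "quat \<Rightarrow> quat" where
  "qexp q = (let r = sqrt (qi q ^ 2 + qj q ^ 2 + qk q ^ 2); e = exp (qre q);
               s = (if r = 0 then 1 else sin r / r)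
             in Quat (e * cos r) (e * s * qi q) (e * s * qj q) (e * s * qk q))"

text \<open>\<open>\<V>\<close> = span of 1, i, j.\<close>
definition qV :: "quat set" where "qV = {q. qk q = 0}"

type_synonym R5 = "real^5"
type_synonym frame = "real^5^5"  \<comment> \<open>row 0 = base point, rows 1..4 = frame vectors\<close>

definition mink :: "R5 \<Rightarrow> R5 \<Rightarrow> real" where
  "mink x y = x$0 * y$0 - x$1 * y$1 - x$2 * y$2 - x$3 * y$3 - x$4 * y$4"

definition hyp4 :: "R5 set" where
  "hyp4 = {x. mink x x = 1 \<and> x$0 > 0}"

definition future_lightlike :: "R5 \<Rightarrow> bool" where
  "future_lightlike p \<longleftrightarrow> mink p p = 0 \<and> p$0 > 0"

definition horo :: "R5 \<Rightarrow> R5 set" where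
  "horo p = {x \<in> hyp4. mink x p = 1}"

text \<open>Inward normal (pointing away from the centre) and outward normal of the horosphere of p at x.\<close>
definition Nin :: "R5 \<Rightarrow> R5 \<Rightarrow> R5" where "Nin p x = x - p"
definition Nout :: "R5 \<Rightarrow> R5 \<Rightarrow> R5" where "Nout p x = p - x"

definition tangent_horo :: "R5 \<Rightarrow> R5 \<Rightarrow> R5 \<Rightarrow> bool" where
  "tangent_horo p x X \<longleftrightarrow> mink X x = 0 \<and> mink X p = 0"

text \<open>Parallel tangent vector field on the horosphere (Levi-Civita connection of the induced
  metric): the ambient derivative along tangent directions has no component tangent to the
  horosphere, i.e. lies in the Minkowski-orthogonal complement span{x, p} of the tangent space.\<close>
definition parallel_on_horo :: "R5 \<Rightarrow> (R5 \<Rightarrow> R5) \<Rightarrow> bool" where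
  "parallel_on_horo p v \<longleftrightarrow>
     (\<forall>x \<in> horo p. \<exists>L. (v has_derivative L) (at x within horo p) \<and>
        (\<forall>X. tangent_horo p x X \<longrightarrow> L X \<in> span {x, p}))"

definition decoration :: "R5 \<Rightarrow> (R5 \<Rightarrow> R5) \<Rightarrow> (R5 \<Rightarrow> R5) \<Rightarrow> bool" where
  "decoration p vi vj \<longleftrightarrow>
     (\<forall>x \<in> horo p. tangent_horo p x (vi x) \<and> tangent_horo p x (vj x) \<and>
        mink (vi x) (vi x) = -1 \<and> mink (vj x) (vj x) = -1 \<and> mink (vi x) (vj x) = 0) \<and>
     parallel_on_horo p vi \<and> parallel_on_horo p vj"

definition mk_frame :: "R5 \<Rightarrow> R5 \<Rightarrow> R5 \<Rightarrow> R5 \<Rightarrow> R5 \<Rightarrow> frame" where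
  "mk_frame x f1 f2 f3 f4 = (\<chi> i. if i = 0 then x else if i = 1 then f1 else if i = 2 then f2
                                    else if i = 3 then f3 else f4)"

text \<open>Oriented orthonormal frames of H^4 (Riemannian metric = - mink on tangent spaces).\<close>
definition frame_bundle :: "frame set" where
  "frame_bundle = {M. M$0 \<in> hyp4 \<and>
      (\<forall>i j. mink (M$i) (M$j) = (if i = j then (if i = 0 then 1 else -1) else 0)) \<and>
      det M > 0}"

text \<open>The spin double cover of the frame bundle: a connected 2-sheeted covering space
  (the universal cover, as the fundamental group of the frame bundle is Z/2).\<close>
definition spin_cover :: "'g::topological_space set \<Rightarrow> ('g \<Rightarrow> frame) \<Rightarrow> bool" where
  "spin_cover Sp proj \<longleftrightarrow> covering_space Sp proj frame_bundle \<and> path_connected Sp \<and>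
     (\<forall>M \<in> frame_bundle. card {g \<in> Sp. proj g = M} = 2)"

definition lifts_path :: "'g::topological_space set \<Rightarrow> ('g \<Rightarrow> frame) \<Rightarrow> (real \<Rightarrow> frame)
                           \<Rightarrow> 'g \<Rightarrow> 'g \<Rightarrow> bool" where
  "lifts_path Sp proj F a b \<longleftrightarrow>
     (\<exists>c. continuous_on {0..1} c \<and> c ` {0..1} \<subseteq> Sp \<and> c 0 = a \<and> c 1 = b \<and>
          (\<forall>s \<in> {0..1}. proj (c s) = F s))"

definition rot41 :: "real \<Rightarrow> frame \<Rightarrow> frame" where
  "rot41 al M = mk_frame (M$0) (cos al *\<^sub>R M$1 - sin al *\<^sub>R M$4) (M$2) (M$3)
                         (cos al *\<^sub>R M$4 + sin al *\<^sub>R M$1)"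

text \<open>Rodrigues rotation matrix (right-handed, angle th about unit axis (a,b,c)), entry (j,i).\<close>
definition rodr :: "real \<Rightarrow> real \<Rightarrow> real \<Rightarrow> real \<Rightarrow> nat \<Rightarrow> nat \<Rightarrow> real" where
  "rodr a b c th j i =
     (let u = (\<lambda>k::nat. if k = 1 then a else if k = 2 then b else c);
          K = (\<lambda>j i::nat. if j = 1 \<and> i = 2 then - c else if j = 1 \<and> i = 3 then b
                   else if j = 2 \<and> i = 1 then c else if j = 2 \<and> i = 3 then - a
                   else if j = 3 \<and> i = 1 then - b else if j = 3 \<and> i = 2 then a else 0)
      in (if j = i then cos th else 0) + sin th * K j i + (1 - cos th) * u j * u i)"

text \<open>Rotate frame M by th about the axis with coordinates (a,b,c) w.r.t. (f1,f2,f3),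
  in the 3-plane spanned by f1,f2,f3 (oriented by (f1,f2,f3), as (f1,f2,f3,f4) is positive).\<close>
definition rot_axis :: "real \<Rightarrow> real \<Rightarrow> real \<Rightarrow> real \<Rightarrow> frame \<Rightarrow> frame" where
  "rot_axis a b c th M =
     (let g = (\<lambda>i. rodr a b c th 1 i *\<^sub>R M$1 + rodr a b c th 2 i *\<^sub>R M$2 + rodr a b c th 3 i *\<^sub>R M$3)
      in mk_frame (M$0) (g 1) (g 2) (g 3) (M$4))"

text \<open>Hyperbolic translation by rho along the oriented geodesic from [p] to [q] (p,q lightlike).\<close>
definition boost :: "R5 \<Rightarrow> R5 \<Rightarrow> real \<Rightarrow> R5 \<Rightarrow> R5" where
  "boost p q rho y = y + ((exp (- rho) - 1) * mink y q / mink p q) *\<^sub>R p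
                       + ((exp rho - 1) * mink y p / mink p q) *\<^sub>R q"

definition boost_frame :: "R5 \<Rightarrow> R5 \<Rightarrow> real \<Rightarrow> frame \<Rightarrow> frame" where
  "boost_frame p q rho M = (\<chi> i. boost p q rho (M$i))"

definition geod :: "R5 \<Rightarrow> R5 \<Rightarrow> R5 set" where
  "geod p q = {x \<in> hyp4. \<exists>a b. a > 0 \<and> b > 0 \<and> x = a *\<^sub>R p + b *\<^sub>R q}"

type_synonym 'g sdhoro = "R5 \<times> (R5 \<Rightarrow> R5) \<times> (R5 \<Rightarrow> R5) \<times> (R5 \<Rightarrow> 'g) \<times> (R5 \<Rightarrow> 'g)"
  \<comment> \<open>(p, v^i, v^j, W^out, W^in)\<close>

definition spin_dec_horo :: "'g::topological_space set \<Rightarrow> ('g \<Rightarrow> frame) \<Rightarrow> 'g sdhoro \<Rightarrow> bool" where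
  "spin_dec_horo Sp proj D \<longleftrightarrow>
     (case D of (p, vi, vj, Wo, Wi) \<Rightarrow>
        future_lightlike p \<and> decoration p vi vj \<and>
        continuous_on (horo p) Wo \<and> Wo ` horo p \<subseteq> Sp \<and>
        continuous_on (horo p) Wi \<and> Wi ` horo p \<subseteq> Sp \<and>
        (\<forall>x \<in> horo p.
           (\<exists>f1. mk_frame x f1 (vi x) (vj x) (Nout p x) \<in> frame_bundle \<and>
                 proj (Wo x) = mk_frame x f1 (vi x) (vj x) (Nout p x)) \<and>
           (\<exists>f1. mk_frame x f1 (vi x) (vj x) (Nin p x) \<in> frame_bundle \<and>
                 proj (Wi x) = mk_frame x f1 (vi x) (vj x) (Nin p x)) \<and>
           lifts_path Sp proj (\<lambda>s. rot41 (s * pi) (proj (Wo x))) (Wo x) (Wi x)))"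

definition lambda_length :: "'g::topological_space set \<Rightarrow> ('g \<Rightarrow> frame) \<Rightarrow> 'g sdhoro \<Rightarrow> 'g sdhoro
                               \<Rightarrow> quat \<Rightarrow> bool" where
  "lambda_length Sp proj D1 D2 l \<longleftrightarrow>
     (case D1 of (p1, _, _, _, Wi1) \<Rightarrow> case D2 of (p2, _, _, Wo2, _) \<Rightarrow>
       (if (\<exists>c>0. p2 = c *\<^sub>R p1) then l = qzero
        else (\<exists>x1 x2. x1 \<in> geod p1 p2 \<inter> horo p1 \<and> x2 \<in> geod p1 p2 \<inter> horo p2 \<and>
               (\<exists>rho th a b c. a\<^sup>2 + b\<^sup>2 + c\<^sup>2 = 1 \<and>
                  lifts_path Sp proj
                    (\<lambda>s. rot_axis a b c (s * th) (boost_frame p1 p2 (s * rho) (proj (Wi1 x1))))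
                    (Wi1 x1) (Wo2 x2) \<and>
                  l = qexp (qmul (Quat (1/2) 0 0 0)
                        (qadd (Quat rho 0 0 0) (qmul (Quat th 0 0 0) (qmul (Quat a b c 0) (Quat 0 0 0 1)))))))))"

end

theory Submission
  imports Defs
begin

text \<open>
  A parallel tangent field on the horosphere of \<open>p\<close> has the form \<open>x \<mapsto> u - mink u x *\<^sub>R p\<close>
  with \<open>mink u p = 0\<close>.  Hence a decorated horosphere is described by three vectors
  \<open>u 1, u 2, u 3\<close> forming an orthonormal basis of \<open>p\<^sup>\<bottom>\<close> modulo \<open>p\<close>, and its inward and outward
  frames are determined by them, the first frame vector by orientation.  Comparing the frames at
  the two ends of the geodesic between two centres shows that the rotation in the lambda length
  from the \<open>m\<close>-th to the \<open>n\<close>-th horosphere has matrix \<open>- flip_sign i * cross_pairing\<close>.  Around the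
  ideal triangle of the three centres these matrices compose to a transformation of signed
  trace \<open>-1\<close>, by Parseval's identity in the three quotients.

  On the quaternion side each lambda length is \<open>twist (exp (\<rho>/2)) s\<close>, with \<open>s\<close> the unit
  quaternion of its rotation, and the \<open>k\<close>-part of the product in the theorem is a multiple of the
  \<open>i\<close>-part of \<open>X = qconj s\<^sub>3\<^sub>1 * s\<^sub>3\<^sub>2 * qconj s\<^sub>1\<^sub>2\<close>.  The signed trace of the rotation by \<open>X\<close> is
  \<open>4 (qi X)\<^sup>2 - 1\<close>, so this \<open>i\<close>-part vanishes.
\<close>

section \<open>Frames in Minkowski space\<close>

lemma exhaust_5:
  fixes i :: 5
  shows "i = 0 \<or> i = 1 \<or> i = 2 \<or> i = 3 \<or> i = 4"
proof (induct i)
  case (of_int z)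
  then have "z = 0 \<or> z = 1 \<or> z = 2 \<or> z = 3 \<or> z = 4" by (simp, linarith)
  then show ?case by (elim disjE) simp_all
qed

lemma UNIV_5: "(UNIV :: 5 set) = {0, 1, 2, 3, 4}"
  using exhaust_5 by blast

lemma sum_UNIV_5: "(\<Sum>i\<in>UNIV. f i) = f 0 + f 1 + f 2 + f 3 + f (4::5)"
proof -
  have "(0::5) \<notin> {1, 2, 3, 4}" "(1::5) \<notin> {2, 3, 4}" "(2::5) \<notin> {3, 4}" "(3::5) \<notin> {4}"
    by simp_all
  then show ?thesis
    by (simp only: UNIV_5 sum.insert finite.emptyI finite.insertI sum.empty empty_iff
        not_False_eq_True add.assoc add_0_right)
qed

lemma det_add_row_span:
  fixes A :: "real^'n^'n"
  assumes "y \<in> span ((($) A) ` (UNIV - {i}))"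
  shows "det (\<chi> k. if k = i then A $ i + y else A $ k) = det A"
proof -
  have row: "row j A = A $ j" for j
    by (simp add: row_def vec_lambda_eta)
  have "{row j A | j. j \<noteq> i} = (($) A) ` (UNIV - {i})"
    by (auto simp: row)
  then show ?thesis
    using det_row_span[of y A i] assms unfolding row span_vec_eq by simp
qed

lemma vec5_eqI:
  assumes "A $ 0 = B $ 0" "A $ 1 = B $ 1" "A $ 2 = B $ 2" "A $ 3 = B $ 3" "A $ 4 = B $ 4"
  shows "(A :: 'a^5) = B"
proof (rule vec_eq_iff[THEN iffD2, rule_format])
  show "A $ i = B $ i" for i
    using exhaust_5[of i] assms by auto
qed

lemma mk_frame_nth [simp]:
  "mk_frame x a b c d $ 0 = x" "mk_frame x a b c d $ 1 = a" "mk_frame x a b c d $ 2 = b"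
  "mk_frame x a b c d $ 3 = c" "mk_frame x a b c d $ 4 = d"
  by (simp_all add: mk_frame_def)

lemma det_mk_frame_add_span:
  "y \<in> span {a, b, c, d} \<Longrightarrow> det (mk_frame (x + y) a b c d) = det (mk_frame x a b c d)"
  "y \<in> span {x, b, c, d} \<Longrightarrow> det (mk_frame x (a + y) b c d) = det (mk_frame x a b c d)"
  "y \<in> span {x, a, c, d} \<Longrightarrow> det (mk_frame x a (b + y) c d) = det (mk_frame x a b c d)"
  "y \<in> span {x, a, b, d} \<Longrightarrow> det (mk_frame x a b (c + y) d) = det (mk_frame x a b c d)"
  "y \<in> span {x, a, b, c} \<Longrightarrow> det (mk_frame x a b c (d + y)) = det (mk_frame x a b c d)"
proof -
  let ?A = "mk_frame x a b c d"
  have add_row: "det B = det ?A"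
    if "y \<in> span S" "S = (($) ?A) ` (UNIV - {i})" "B = (\<chi> k. if k = i then ?A $ i + y else ?A $ k)"
    for B S i
    using det_add_row_span[of y ?A i] that by simp
  have other_rows: "UNIV - {0} = {1, 2, 3, 4 :: 5}" "UNIV - {1} = {0, 2, 3, 4 :: 5}" "UNIV - {2} = {0, 1, 3, 4 :: 5}"
    "UNIV - {3} = {0, 1, 2, 4 :: 5}" "UNIV - {4} = {0, 1, 2, 3 :: 5}"
    using exhaust_5 by auto
  show "y \<in> span {a, b, c, d} \<Longrightarrow> det (mk_frame (x + y) a b c d) = det ?A"
    by (rule add_row[where i = 0], assumption, simp add: other_rows, rule vec5_eqI; simp)
  show "y \<in> span {x, b, c, d} \<Longrightarrow> det (mk_frame x (a + y) b c d) = det ?A"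
    by (rule add_row[where i = 1], assumption, simp add: other_rows, rule vec5_eqI; simp)
  show "y \<in> span {x, a, c, d} \<Longrightarrow> det (mk_frame x a (b + y) c d) = det ?A"
    by (rule add_row[where i = 2], assumption, simp add: other_rows, rule vec5_eqI; simp)
  show "y \<in> span {x, a, b, d} \<Longrightarrow> det (mk_frame x a b (c + y) d) = det ?A"
    by (rule add_row[where i = 3], assumption, simp add: other_rows, rule vec5_eqI; simp)
  show "y \<in> span {x, a, b, c} \<Longrightarrow> det (mk_frame x a b c (d + y)) = det ?A"
    by (rule add_row[where i = 4], assumption, simp add: other_rows, rule vec5_eqI; simp)
qed

lemma det_mk_frame_scale:
  "det (mk_frame x (r *\<^sub>R a) b c d) = r * det (mk_frame x a b c d)"
  "det (mk_frame x a b c (r *\<^sub>R d)) = r * det (mk_frame x a b c d)"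
proof -
  let ?A = "mk_frame x a b c d"
  have "(\<chi> k. if k = i then ?A $ k else ?A $ k) = ?A" for i :: 5
    by (simp add: vec_eq_iff)
  moreover have "(\<chi> k. if k = 1 then r *s ?A $ k else ?A $ k) = mk_frame x (r *\<^sub>R a) b c d"
    "(\<chi> k. if k = 4 then r *s ?A $ k else ?A $ k) = mk_frame x a b c (r *\<^sub>R d)"
    by (rule vec5_eqI; simp add: scalar_mult_eq_scaleR)+
  ultimately show "det (mk_frame x (r *\<^sub>R a) b c d) = r * det ?A"
    "det (mk_frame x a b c (r *\<^sub>R d)) = r * det ?A"
    using det_row_mul[of 1 r "($) ?A" "($) ?A"] det_row_mul[of 4 r "($) ?A" "($) ?A"]
    by simp_all
qed

lemma mink_commute: "mink x y = mink y x"
  by (simp add: mink_def algebra_simps)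

lemma mink_bilinear [simp]:
  "mink (x + y) z = mink x z + mink y z" "mink z (x + y) = mink z x + mink z y"
  "mink (x - y) z = mink x z - mink y z" "mink z (x - y) = mink z x - mink z y"
  "mink (c *\<^sub>R x) z = c * mink x z" "mink z (c *\<^sub>R x) = c * mink z x"
  "mink (- x) z = - mink x z" "mink z (- x) = - mink z x"
  "mink 0 z = 0" "mink z 0 = 0"
  by (simp_all add: mink_def algebra_simps)

lemma bounded_linear_mink: "bounded_linear (\<lambda>w. mink w z)"
  unfolding linear_conv_bounded_linear[symmetric] by (rule linearI) simp_all

lemma mk_frame_in_frame_bundleD:
  assumes "mk_frame x a b c d \<in> frame_bundle"
  shows "mink x x = 1" "mink a a = -1" "mink b b = -1" "mink c c = -1" "mink d d = -1"
    "mink x a = 0" "mink x b = 0" "mink x c = 0" "mink x d = 0"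
    "mink a b = 0" "mink a c = 0" "mink a d = 0" "mink b c = 0" "mink b d = 0" "mink c d = 0"
    "x \<in> hyp4" "det (mk_frame x a b c d) > 0"
proof -
  let ?M = "mk_frame x a b c d"
  have H: "mink (?M $ i) (?M $ j) = (if i = j then (if i = 0 then 1 else -1) else 0)" for i j
    using assms unfolding frame_bundle_def by blast
  show "mink x x = 1" "mink a a = -1" "mink b b = -1" "mink c c = -1" "mink d d = -1"
    "mink x a = 0" "mink x b = 0" "mink x c = 0" "mink x d = 0"
    "mink a b = 0" "mink a c = 0" "mink a d = 0" "mink b c = 0" "mink b d = 0" "mink c d = 0"
    using H[of 0 0] H[of 1 1] H[of 2 2] H[of 3 3] H[of 4 4] H[of 0 1] H[of 0 2] H[of 0 3] H[of 0 4]
      H[of 1 2] H[of 1 3] H[of 1 4] H[of 2 3] H[of 2 4] H[of 3 4] by simp_all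
  show "x \<in> hyp4" "det ?M > 0"
    using assms unfolding frame_bundle_def by auto
qed

lemma mink_orthogonal_rows_eq_0:
  assumes "\<And>i. mink (M $ i) z = 0" and "det M \<noteq> 0"
  shows "z = 0"
proof -
  define w :: R5 where "w = (\<chi> i. if i = 0 then z $ 0 else - z $ i)"
  have "(M *v w) $ i = mink (M $ i) z" for i
    unfolding matrix_vector_mult_def vec_lambda_beta sum_UNIV_5 mink_def by (simp add: w_def)
  then have "M *v w = 0"
    using assms(1) by (simp add: vec_eq_iff)
  moreover obtain B where "B ** M = mat 1"
    using assms(2) invertible_det_nz invertible_def by blast
  ultimately have "w = 0"
    by (metis matrix_vector_mul_assoc matrix_vector_mul_lid matrix_vector_mult_0_right)
  then show ?thesis
    by (simp add: vec_eq_iff w_def) (metis neg_equal_0_iff_equal)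
qed

lemma frame_expansion:
  assumes "mk_frame x a b c d \<in> frame_bundle"
  shows "y = mink y x *\<^sub>R x - mink y a *\<^sub>R a - mink y b *\<^sub>R b - mink y c *\<^sub>R c - mink y d *\<^sub>R d"
proof -
  note o = mk_frame_in_frame_bundleD[OF assms]
  define z where
    "z = y - (mink y x *\<^sub>R x - mink y a *\<^sub>R a - mink y b *\<^sub>R b - mink y c *\<^sub>R c - mink y d *\<^sub>R d)"
  have "mink a x = 0" "mink b x = 0" "mink c x = 0" "mink d x = 0" "mink b a = 0" "mink c a = 0"
    "mink d a = 0" "mink c b = 0" "mink d b = 0" "mink d c = 0"
    using o by (simp_all add: mink_commute)
  moreover have "mink y x = mink x y" "mink y a = mink a y" "mink y b = mink b y"
    "mink y c = mink c y" "mink y d = mink d y"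
    by (simp_all add: mink_commute)
  ultimately have "mink (mk_frame x a b c d $ i) z = 0" for i
    using exhaust_5[of i] o by (elim disjE) (simp_all add: z_def)
  then have "z = 0"
    using mink_orthogonal_rows_eq_0 o(17) by (metis less_irrefl)
  then show ?thesis
    unfolding z_def by simp
qed

section \<open>Horospheres and their parallel frames\<close>

lemma horoD:
  assumes "x \<in> horo p"
  shows "mink x p = 1" "mink p x = 1" "mink x x = 1"
  using assms by (simp_all add: horo_def hyp4_def mink_commute[of p x])

lemma cauchy_schwarz_4:
  fixes a1 a2 a3 a4 b1 b2 b3 b4 :: real
  shows "(a1 * b1 + a2 * b2 + a3 * b3 + a4 * b4)\<^sup>2
    \<le> (a1\<^sup>2 + a2\<^sup>2 + a3\<^sup>2 + a4\<^sup>2) * (b1\<^sup>2 + b2\<^sup>2 + b3\<^sup>2 + b4\<^sup>2)"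
proof -
  have "(a1\<^sup>2 + a2\<^sup>2 + a3\<^sup>2 + a4\<^sup>2) * (b1\<^sup>2 + b2\<^sup>2 + b3\<^sup>2 + b4\<^sup>2)
      - (a1 * b1 + a2 * b2 + a3 * b3 + a4 * b4)\<^sup>2
    = (a1 * b2 - a2 * b1)\<^sup>2 + (a1 * b3 - a3 * b1)\<^sup>2 + (a1 * b4 - a4 * b1)\<^sup>2
      + (a2 * b3 - a3 * b2)\<^sup>2 + (a2 * b4 - a4 * b2)\<^sup>2 + (a3 * b4 - a4 * b3)\<^sup>2"
    by (simp add: power2_eq_square algebra_simps)
  moreover have "\<dots> \<ge> 0" by simp
  ultimately show ?thesis by linarith
qed

text \<open>On the lower sheet of the hyperboloid Cauchy-Schwarz would force \<open>mink y p \<le> 0\<close>.\<close>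
lemma horoI:
  assumes fl: "future_lightlike p" and yy: "mink y y = 1" and yp: "mink y p = 1"
  shows "y \<in> horo p"
proof -
  have "y $ 0 > 0"
  proof (rule ccontr)
    assume "\<not> y $ 0 > 0"
    then have y0: "y $ 0 \<le> 0" by simp
    have p0: "p $ 0 > 0" and pp: "mink p p = 0"
      using fl by (auto simp: future_lightlike_def)
    define S where "S = y$1 * p$1 + y$2 * p$2 + y$3 * p$3 + y$4 * p$4"
    define Y where "Y = (y$1)\<^sup>2 + (y$2)\<^sup>2 + (y$3)\<^sup>2 + (y$4)\<^sup>2"
    define P where "P = (p$1)\<^sup>2 + (p$2)\<^sup>2 + (p$3)\<^sup>2 + (p$4)\<^sup>2"
    have cs: "S\<^sup>2 \<le> Y * P"
      unfolding S_def Y_def P_def by (rule cauchy_schwarz_4)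
    have Y: "Y = (y$0)\<^sup>2 - 1" and P: "P = (p$0)\<^sup>2" and S: "S = y$0 * p$0 - 1"
      using yy pp yp unfolding Y_def P_def S_def mink_def by (simp_all add: power2_eq_square)
    have neg: "y$0 * p$0 \<le> 0"
      using y0 p0 by (simp add: mult_nonpos_nonneg)
    have "S\<^sup>2 = (y$0 * p$0)\<^sup>2 - 2 * (y$0 * p$0) + 1"
      unfolding S by (simp add: power2_eq_square algebra_simps)
    also have "\<dots> > (y$0 * p$0)\<^sup>2 - (p$0)\<^sup>2"
      using neg p0 by (simp add: power2_eq_square) (smt (verit) mult_pos_pos)
    also have "(y$0 * p$0)\<^sup>2 - (p$0)\<^sup>2 = Y * P"
      unfolding Y P by (simp add: power2_eq_square algebra_simps)
    finally show False
      using cs by simp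
  qed
  then show ?thesis
    using yy yp by (simp add: horo_def hyp4_def)
qed

lemma horo_nonempty:
  assumes "future_lightlike p"
  shows "horo p \<noteq> {}"
proof -
  have p0: "p $ 0 > 0" and pp: "mink p p = 0"
    using assms by (auto simp: future_lightlike_def)
  define e :: R5 where "e = axis 0 1"
  have ee: "mink e e = 1" and ep: "mink e p = p $ 0"
    by (simp_all add: e_def mink_def axis_def)
  define x where "x = (1 / p $ 0) *\<^sub>R e + ((1 - 1 / (p $ 0)\<^sup>2) / 2) *\<^sub>R p"
  have "mink x x = 1" "mink x p = 1"
    using p0 by (simp_all add: x_def ee ep pp mink_commute[of p e] field_simps power2_eq_square)
  then show ?thesis
    using horoI[OF assms] by blast
qed

lemma orthogonal_to_perp_lightlike:
  assumes fl: "future_lightlike p" and D: "\<And>z. mink z p = 0 \<Longrightarrow> mink D z = 0"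
  obtains c where "D = c *\<^sub>R p"
proof
  have p0: "p $ 0 > 0"
    using fl by (simp add: future_lightlike_def)
  have "D $ k = (D $ 0 / p $ 0) * p $ k" if k: "k \<noteq> 0" for k :: 5
  proof -
    define z :: R5 where "z = (p $ k) *\<^sub>R axis 0 1 + (p $ 0) *\<^sub>R axis k 1"
    have z0: "z $ 0 = p $ k" and zi: "\<And>i. i \<noteq> 0 \<Longrightarrow> z $ i = (if i = k then p $ 0 else 0)"
      using k by (auto simp: z_def axis_def)
    have "mink z p = 0"
      using exhaust_5[of k] k unfolding mink_def by (elim disjE) (simp_all add: zi z0 algebra_simps)
    then have "mink D z = 0"
      by (rule D)
    then have "D $ 0 * p $ k - D $ k * p $ 0 = 0"
      using exhaust_5[of k] k unfolding mink_def by (elim disjE) (simp_all add: zi z0 algebra_simps)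
    then show ?thesis
      using p0 by (simp add: field_simps)
  qed
  then show "D = (D $ 0 / p $ 0) *\<^sub>R p"
    using p0 by (simp add: vec_eq_iff) (metis nonzero_eq_divide_eq order_less_irrefl)
qed

lemma horo_curve:
  assumes fl: "future_lightlike p" and x: "x \<in> horo p" and x': "x' \<in> horo p"
  obtains g V where "\<And>t. g t \<in> horo p" "g 0 = x" "g 1 = x'"
    "\<And>t. (g has_derivative (\<lambda>h. h *\<^sub>R V t)) (at t)" "\<And>t. tangent_horo p (g t) (V t)"
proof -
  have pp: "mink p p = 0"
    using fl by (simp add: future_lightlike_def)
  note hx = horoD[OF x] and hx' = horoD[OF x']
  define d where "d = x' - x"
  have dp: "mink d p = 0" "mink p d = 0"
    using hx hx' by (simp_all add: d_def)
  have dx: "mink d x = mink x d"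
    by (rule mink_commute)
  define g where "g t = x + t *\<^sub>R d - (t * mink x d + t\<^sup>2 / 2 * mink d d) *\<^sub>R p" for t :: real
  define V where "V t = d - (mink x d + t * mink d d) *\<^sub>R p" for t :: real
  show ?thesis
  proof
    show "g t \<in> horo p" for t
      using hx dp pp dx by (intro horoI[OF fl]) (simp_all add: g_def algebra_simps power2_eq_square)
    show "g 0 = x"
      by (simp add: g_def)
    have "mink x d = mink x x' - 1" "mink d d = 2 - 2 * mink x x'"
      using hx hx' by (simp_all add: d_def mink_commute[of x' x])
    then have "mink x d + 1 / 2 * mink d d = 0"
      by (simp add: field_simps)
    then show "g 1 = x'"
      by (simp add: g_def d_def)
    show "(g has_derivative (\<lambda>h. h *\<^sub>R V t)) (at t)" for t
      unfolding g_def V_def by (auto intro!: derivative_eq_intros simp: algebra_simps power2_eq_square)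
    show "tangent_horo p (g t) (V t)" for t
      unfolding tangent_horo_def using hx dp pp dx
      by (simp add: g_def V_def algebra_simps power2_eq_square)
  qed
qed

text \<open>Parallelism puts the derivative in \<open>span {x, p}\<close>; tangency to the horosphere kills its
  \<open>x\<close>-component.\<close>
lemma parallel_on_horo_derivative:
  assumes fl: "future_lightlike p" and par: "parallel_on_horo p v"
    and tg: "\<And>y. y \<in> horo p \<Longrightarrow> mink (v y) p = 0"
    and g: "\<And>s. g s \<in> horo p" "(g has_derivative (\<lambda>h. h *\<^sub>R V)) (at t)" "tangent_horo p (g t) V"
    and z: "mink z p = 0"
  shows "((\<lambda>s. mink (v (g s)) z) has_derivative (\<lambda>h. 0)) (at t)"
proof -
  have pp: "mink p p = 0"
    using fl by (simp add: future_lightlike_def)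
  obtain L where L: "(v has_derivative L) (at (g t) within horo p)"
    and LV: "L V \<in> span {g t, p}"
    using par g(1,3) unfolding parallel_on_horo_def by blast
  have chain: "((\<lambda>s. v (g s)) has_derivative (\<lambda>h. L (h *\<^sub>R V))) (at t)"
    using diff_chain_within[OF g(2) has_derivative_subset[OF L]] g(1) by (auto simp: comp_def)
  have L_scale: "L (h *\<^sub>R V) = h *\<^sub>R L V" for h
    using has_derivative_linear[OF L] by (simp add: linear_scale)
  have deriv: "((\<lambda>s. mink (v (g s)) w) has_derivative (\<lambda>h. h * mink (L V) w)) (at t)" for w
    using bounded_linear.has_derivative[OF bounded_linear_mink chain, of w] by (simp add: L_scale)
  have "((\<lambda>s. mink (v (g s)) p) has_derivative (\<lambda>h. 0)) (at t)"
    using tg g(1) by simp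
  then have "(\<lambda>h. h * mink (L V) p) = (\<lambda>h. 0)"
    by (rule has_derivative_unique[OF deriv])
  then have LVp: "mink (L V) p = 0"
    by (metis mult_1)
  obtain a b where "L V - a *\<^sub>R g t = b *\<^sub>R p"
    using LV unfolding span_insert[of "g t"] span_singleton by blast
  then have ab: "L V = a *\<^sub>R g t + b *\<^sub>R p"
    by (simp add: algebra_simps)
  have "a = 0"
    using LVp horoD[OF g(1)] pp by (simp add: ab)
  then have "mink (L V) z = 0"
    using z by (simp add: ab mink_commute[of p z])
  then show ?thesis
    using deriv[of z] by simp
qed

definition horo_parallel :: "R5 \<Rightarrow> R5 \<Rightarrow> R5 \<Rightarrow> R5" where
  "horo_parallel p u x = u - mink u x *\<^sub>R p"

lemma parallel_on_horo_eq_horo_parallel: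
  assumes fl: "future_lightlike p" and par: "parallel_on_horo p v"
    and tg: "\<And>y. y \<in> horo p \<Longrightarrow> tangent_horo p y (v y)"
    and x: "x \<in> horo p" and x': "x' \<in> horo p"
  shows "v x' = horo_parallel p (v x) x'"
proof -
  obtain g V where g: "\<And>t. g t \<in> horo p" "g 0 = x" "g 1 = x'"
    "\<And>t. (g has_derivative (\<lambda>h. h *\<^sub>R V t)) (at t)" "\<And>t. tangent_horo p (g t) (V t)"
    using horo_curve[OF fl x x'] by blast
  have tgp: "mink (v y) p = 0" if "y \<in> horo p" for y
    using tg[OF that] by (simp add: tangent_horo_def)
  have "mink (v x' - v x) z = 0" if z: "mink z p = 0" for z
  proof -
    have "\<exists>c. \<forall>t\<in>UNIV. mink (v (g t)) z = c"
      using parallel_on_horo_derivative[OF fl par tgp g(1) g(4) g(5) z]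
      by (intro has_derivative_zero_constant) auto
    then show ?thesis
      using g(2,3) by force
  qed
  then obtain c where "v x' - v x = c *\<^sub>R p"
    using orthogonal_to_perp_lightlike[OF fl] by blast
  then have c: "v x' = v x + c *\<^sub>R p"
    by (simp add: diff_eq_eq add.commute)
  have "mink (v x') x' = 0"
    using tg[OF x'] by (simp add: tangent_horo_def)
  then have "c = - mink (v x) x'"
    using horoD[OF x'] by (simp add: c)
  then show ?thesis
    by (simp add: c horo_parallel_def)
qed

lemma mink_horo_parallel:
  assumes "mink u p = 0" "mink p p = 0"
  shows "mink (horo_parallel p u x) p = 0"
    and "mink x p = 1 \<Longrightarrow> mink (horo_parallel p u x) x = 0"
    and "mink w p = 0 \<Longrightarrow> mink (horo_parallel p u x) (horo_parallel p w x) = mink u w"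
  using assms by (simp_all add: horo_parallel_def mink_commute[of p x] mink_commute[of p w])

text \<open>\<open>u 1, u 2, u 3\<close> project to an orthonormal basis of the (negative definite) quotient of
  \<open>p\<^sup>\<bottom>\<close> by \<open>p\<close>; the last clause is Parseval's identity on that quotient.\<close>
definition horo_basis :: "R5 \<Rightarrow> (nat \<Rightarrow> R5) \<Rightarrow> bool" where
  "horo_basis p u \<longleftrightarrow>
     (\<forall>k\<in>{1,2,3}. mink (u k) p = 0) \<and>
     (\<forall>j\<in>{1,2,3}. \<forall>k\<in>{1,2,3}. mink (u j) (u k) = (if j = k then -1 else 0)) \<and>
     (\<forall>X Y. mink X p = 0 \<longrightarrow> mink Y p = 0 \<longrightarrow>
        (\<Sum>k\<in>{1,2,3}. mink (u k) X * mink (u k) Y) = - mink X Y)"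

definition horo_in_frame :: "R5 \<Rightarrow> (nat \<Rightarrow> R5) \<Rightarrow> R5 \<Rightarrow> frame" where
  "horo_in_frame p u x = mk_frame x (horo_parallel p (u 1) x) (horo_parallel p (u 2) x)
     (horo_parallel p (u 3) x) (x - p)"

definition horo_out_frame :: "R5 \<Rightarrow> (nat \<Rightarrow> R5) \<Rightarrow> R5 \<Rightarrow> frame" where
  "horo_out_frame p u x = mk_frame x (- horo_parallel p (u 1) x) (horo_parallel p (u 2) x)
     (horo_parallel p (u 3) x) (p - x)"

lemma det_horo_in_frame:
  assumes F0: "mk_frame x0 u1 u2 u3 (x0 - p) \<in> frame_bundle"
    and h: "mink x0 p = 1" "mink x p = 1" "mink p p = 0"
  shows "det (mk_frame x (horo_parallel p u1 x) (horo_parallel p u2 x) (horo_parallel p u3 x) (x - p))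
    = det (mk_frame x0 u1 u2 u3 (x0 - p))"
proof -
  let ?E1 = "horo_parallel p u1 x" and ?E2 = "horo_parallel p u2 x" and ?E3 = "horo_parallel p u3 x"
  have x0_shift: "x - x0 \<in> span {u1, u2, u3, - p}"
  proof -
    let ?y = "x - x0"
    have "?y = mink ?y x0 *\<^sub>R x0 - mink ?y u1 *\<^sub>R u1 - mink ?y u2 *\<^sub>R u2 - mink ?y u3 *\<^sub>R u3
        - mink ?y (x0 - p) *\<^sub>R (x0 - p)"
      by (rule frame_expansion[OF F0])
    also have "\<dots> = (- mink ?y u1) *\<^sub>R u1 + (- mink ?y u2) *\<^sub>R u2 + (- mink ?y u3) *\<^sub>R u3
        + (- mink ?y x0) *\<^sub>R (- p)"
      using h by (simp add: algebra_simps mink_commute[of p x])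
    also have "\<dots> \<in> span {u1, u2, u3, - p}"
      by (intro span_add span_scale span_base) auto
    finally show ?thesis .
  qed
  have "det (mk_frame x ?E1 ?E2 ?E3 (x - p)) = det (mk_frame x ?E1 ?E2 ?E3 (- p + x))"
    by (simp add: algebra_simps)
  also have "\<dots> = det (mk_frame x ?E1 ?E2 ?E3 (- p))"
    by (rule det_mk_frame_add_span(5)) (simp add: span_base)
  also have "\<dots> = det (mk_frame x (u1 + mink u1 x *\<^sub>R (- p)) (u2 + mink u2 x *\<^sub>R (- p))
      (u3 + mink u3 x *\<^sub>R (- p)) (- p))"
    by (simp add: horo_parallel_def)
  also have "\<dots> = det (mk_frame x u1 (u2 + mink u2 x *\<^sub>R (- p)) (u3 + mink u3 x *\<^sub>R (- p)) (- p))"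
    by (rule det_mk_frame_add_span(2), intro span_scale span_base, simp)
  also have "\<dots> = det (mk_frame x u1 u2 (u3 + mink u3 x *\<^sub>R (- p)) (- p))"
    by (rule det_mk_frame_add_span(3), intro span_scale span_base, simp)
  also have "\<dots> = det (mk_frame x u1 u2 u3 (- p))"
    by (rule det_mk_frame_add_span(4), intro span_scale span_base, simp)
  also have "\<dots> = det (mk_frame (x0 + (x - x0)) u1 u2 u3 (- p))"
    by simp
  also have "\<dots> = det (mk_frame x0 u1 u2 u3 (- p))"
    using det_mk_frame_add_span(1) x0_shift by blast
  also have "\<dots> = det (mk_frame x0 u1 u2 u3 (- p + x0))"
    by (rule det_mk_frame_add_span(5)[symmetric]) (simp add: span_base)
  finally show ?thesis
    by (simp add: algebra_simps)
qed

lemma frame_first_vector_eq: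
  assumes F: "mk_frame x e b c d \<in> frame_bundle"
    and f: "mink f f = -1" "mink f x = 0" "mink f b = 0" "mink f c = 0" "mink f d = 0"
    and det: "det (mk_frame x f b c d) > 0"
  shows "f = e"
proof -
  define r where "r = - mink f e"
  have fe: "f = r *\<^sub>R e"
    using frame_expansion[OF F, of f] f by (simp add: r_def)
  have "r * r = 1"
    using f(1) mk_frame_in_frame_bundleD(2)[OF F] by (simp add: fe)
  moreover have "r > 0"
    using det mk_frame_in_frame_bundleD(17)[OF F] by (simp add: fe det_mk_frame_scale zero_less_mult_iff)
  ultimately have "r = 1"
    by (metis mult_cancel_right1 mult_le_cancel_right2 nle_le order_less_le)
  then show ?thesis
    by (simp add: fe)
qed

lemma frame_parseval:
  assumes F0: "mk_frame x0 u1 u2 u3 (x0 - p) \<in> frame_bundle"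
    and X: "mink X p = 0" and Y: "mink Y p = 0"
  shows "mink u1 X * mink u1 Y + mink u2 X * mink u2 Y + mink u3 X * mink u3 Y = - mink X Y"
proof -
  have "mink X Y = mink (mink X x0 *\<^sub>R x0 - mink X u1 *\<^sub>R u1 - mink X u2 *\<^sub>R u2 - mink X u3 *\<^sub>R u3
      - mink X (x0 - p) *\<^sub>R (x0 - p)) Y"
    by (subst frame_expansion[OF F0, of X]) (rule refl)
  also have "\<dots> = - (mink X u1 * mink u1 Y + mink X u2 * mink u2 Y + mink X u3 * mink u3 Y)"
    using X Y by (simp add: algebra_simps mink_commute[of p Y])
  finally show ?thesis
    by (simp add: mink_commute[of _ X])
qed

lemma det_mk_frame_neg_1_4:
  "det (mk_frame x (- a) b c (- d)) = det (mk_frame x a b c d)"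
  using det_mk_frame_scale(1)[where r = "-1" and d = "- d"] det_mk_frame_scale(2)[where r = "-1"]
  by simp

lemma frame_horo_basis:
  fixes u :: "nat \<Rightarrow> R5"
  assumes F0: "mk_frame x0 (u 1) (u 2) (u 3) (x0 - p) \<in> frame_bundle"
  shows "horo_basis p u"
proof -
  note o = mk_frame_in_frame_bundleD[OF F0]
  have "mink (u k) p = 0" if "k \<in> {1, 2, 3}" for k
    using that o(6-8,12,14,15) by (auto simp: mink_commute[of x0])
  moreover have "mink (u j) (u k) = (if j = k then -1 else 0)" if "j \<in> {1, 2, 3}" "k \<in> {1, 2, 3}" for j k
    using that o(2-4,10,11,13) mink_commute[of "u 2" "u 1"] mink_commute[of "u 3" "u 1"]
      mink_commute[of "u 3" "u 2"] by auto
  ultimately show ?thesis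
    unfolding horo_basis_def using frame_parseval[OF F0] by (simp add: add.assoc)
qed

lemma horo_basis_orthonormal_at:
  assumes u: "horo_basis p u" and pp: "mink p p = 0" and "j \<in> {1, 2, 3}" "k \<in> {1, 2, 3}"
  shows "mink (horo_parallel p (u j) x) (horo_parallel p (u k) x) = (if j = k then -1 else 0)"
    and "mink (horo_parallel p (u k) x) p = 0"
    and "mink x p = 1 \<Longrightarrow> mink (horo_parallel p (u k) x) x = 0"
proof -
  have "mink (u j) p = 0" "mink (u k) p = 0" "mink (u j) (u k) = (if j = k then -1 else 0)"
    using u assms(3,4) unfolding horo_basis_def by auto
  then show "mink (horo_parallel p (u j) x) (horo_parallel p (u k) x) = (if j = k then -1 else 0)"
    "mink (horo_parallel p (u k) x) p = 0" "mink x p = 1 \<Longrightarrow> mink (horo_parallel p (u k) x) x = 0"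
    using mink_horo_parallel pp by simp_all
qed

lemma horo_in_frame_first_vector:
  fixes u :: "nat \<Rightarrow> R5"
  assumes pp: "mink p p = 0" and F0: "mk_frame x0 (u 1) (u 2) (u 3) (x0 - p) \<in> frame_bundle"
    and x0: "x0 \<in> horo p" and x: "x \<in> horo p"
    and Fx: "mk_frame x f (horo_parallel p (u 2) x) (horo_parallel p (u 3) x) (x - p) \<in> frame_bundle"
  shows "f = horo_parallel p (u 1) x"
proof -
  have "det (horo_in_frame p u x) > 0"
    using det_horo_in_frame[OF F0 horoD(1)[OF x0] horoD(1)[OF x] pp] mk_frame_in_frame_bundleD(17)[OF F0]
    by (simp add: horo_in_frame_def)
  moreover note orth = horo_basis_orthonormal_at[OF frame_horo_basis[OF F0] pp, of 1]
  ultimately show ?thesis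
    using orth[of 1] orth[of 2] orth[of 3] horoD(1)[OF x]
    by (intro frame_first_vector_eq[OF Fx, symmetric]) (simp_all add: horo_in_frame_def)
qed

lemma horo_out_frame_first_vector:
  assumes F: "horo_in_frame p u x \<in> frame_bundle"
    and Gx: "mk_frame x g (horo_parallel p (u 2) x) (horo_parallel p (u 3) x) (p - x) \<in> frame_bundle"
  shows "g = - horo_parallel p (u 1) x"
proof -
  note og = mk_frame_in_frame_bundleD[OF Gx]
  have "det (mk_frame x (- g) (horo_parallel p (u 2) x) (horo_parallel p (u 3) x) (x - p)) > 0"
    using og(17) det_mk_frame_neg_1_4[of x g _ _ "p - x"] by simp
  then have "- g = horo_parallel p (u 1) x"
    using og(2,6,10-12) F unfolding horo_in_frame_def
    by (intro frame_first_vector_eq) (simp_all add: mink_commute[of g x])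
  then show ?thesis
    by (simp add: minus_equation_iff[of g])
qed

lemma spin_dec_horo_frames:
  assumes sd: "spin_dec_horo Sp proj (p, vi, vj, Wo, Wi)"
  obtains u where "horo_basis p u" "\<forall>x\<in>horo p. proj (Wi x) = horo_in_frame p u x"
    "\<forall>x\<in>horo p. proj (Wo x) = horo_out_frame p u x"
proof -
  have fl: "future_lightlike p" and dec: "decoration p vi vj"
    and fr: "\<And>x. x \<in> horo p \<Longrightarrow>
           (\<exists>f. mk_frame x f (vi x) (vj x) (p - x) \<in> frame_bundle \<and>
                proj (Wo x) = mk_frame x f (vi x) (vj x) (p - x)) \<and>
           (\<exists>f. mk_frame x f (vi x) (vj x) (x - p) \<in> frame_bundle \<and>
                proj (Wi x) = mk_frame x f (vi x) (vj x) (x - p))"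
    using sd unfolding spin_dec_horo_def prod.case Nin_def Nout_def by blast+
  have pp: "mink p p = 0"
    using fl by (simp add: future_lightlike_def)
  obtain x0 where x0: "x0 \<in> horo p"
    using horo_nonempty[OF fl] by blast
  obtain u1 where "mk_frame x0 u1 (vi x0) (vj x0) (x0 - p) \<in> frame_bundle"
    using fr[OF x0] by blast
  define u where "u k = (if k = 1 then u1 else if k = 2 then vi x0 else vj x0)" for k :: nat
  have F0: "mk_frame x0 (u 1) (u 2) (u 3) (x0 - p) \<in> frame_bundle"
    using \<open>mk_frame x0 u1 _ _ _ \<in> _\<close> by (simp add: u_def)
  have tg: "tangent_horo p y (vi y)" "tangent_horo p y (vj y)" if "y \<in> horo p" for y
    using dec that unfolding decoration_def by blast+
  have par: "parallel_on_horo p vi" "parallel_on_horo p vj"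
    using dec unfolding decoration_def by blast+
  have v_eq: "vi x = horo_parallel p (u 2) x" "vj x = horo_parallel p (u 3) x" if x: "x \<in> horo p" for x
    using parallel_on_horo_eq_horo_parallel[OF fl par(1) tg(1) x0 x]
      parallel_on_horo_eq_horo_parallel[OF fl par(2) tg(2) x0 x] by (simp_all add: u_def)
  have in_frame: "proj (Wi x) = horo_in_frame p u x \<and> horo_in_frame p u x \<in> frame_bundle"
    if x: "x \<in> horo p" for x
    using fr[OF x] horo_in_frame_first_vector[OF pp F0 x0 x] unfolding v_eq[OF x] horo_in_frame_def
    by blast
  have out_frame: "proj (Wo x) = horo_out_frame p u x" if x: "x \<in> horo p" for x
    using fr[OF x] horo_out_frame_first_vector[OF in_frame[OF x, THEN conjunct2]]
    unfolding v_eq[OF x] horo_out_frame_def by blast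
  show ?thesis
    using that frame_horo_basis[OF F0] in_frame out_frame by blast
qed

section \<open>Lambda lengths as rotation matrices\<close>

definition lambda_quat :: "real \<Rightarrow> real \<Rightarrow> real \<Rightarrow> real \<Rightarrow> real \<Rightarrow> quat" where
  "lambda_quat rho th a b c = qexp (qmul (Quat (1/2) 0 0 0)
     (qadd (Quat rho 0 0 0) (qmul (Quat th 0 0 0) (qmul (Quat a b c 0) (Quat 0 0 0 1)))))"

lemma lambda_length_same_centre:
  assumes "lambda_length Sp proj (pm, vim, vjm, Wom, Wim) (pn, vin, vjn, Won, Win) l"
    and "\<exists>c>0. pn = c *\<^sub>R pm"
  shows "l = qzero"
  using assms unfolding lambda_length_def prod.case by simp

lemma geod_commute: "geod p q = geod q p"
proof -
  have "(\<exists>a>0. \<exists>b>0. x = a *\<^sub>R p + b *\<^sub>R q) \<longleftrightarrow> (\<exists>a>0. \<exists>b>0. x = a *\<^sub>R q + b *\<^sub>R p)" for x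
    by (metis add.commute)
  then show ?thesis
    by (simp add: geod_def)
qed

lemma geod_inter_horo:
  assumes "x \<in> geod pm pn \<inter> horo pm" and "mink pm pm = 0"
  obtains a where "x = a *\<^sub>R pm + (1 / mink pm pn) *\<^sub>R pn" and "mink pm pn \<noteq> 0"
proof -
  obtain a b where x: "x = a *\<^sub>R pm + b *\<^sub>R pn"
    using assms(1) unfolding geod_def by blast
  have b: "b * mink pm pn = 1"
    using horoD(1)[of x pm] assms by (simp add: x mink_commute[of pn pm])
  then have mu: "mink pm pn \<noteq> 0"
    by auto
  with b have "b = 1 / mink pm pn"
    by (simp add: eq_divide_eq)
  then show ?thesis
    using that[of a] x mu by simp
qed

lemma lambda_lengthE:
  assumes "lambda_length Sp proj (pm, vim, vjm, Wom, Wim) (pn, vin, vjn, Won, Win) l"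
    and "\<not> (\<exists>c>0. pn = c *\<^sub>R pm)" and pp: "mink pm pm = 0" "mink pn pn = 0"
  obtains x1 x2 al be rho th a b c where "mink pm pn \<noteq> 0"
    "x1 \<in> horo pm" "x1 = al *\<^sub>R pm + (1 / mink pm pn) *\<^sub>R pn"
    "x2 \<in> horo pn" "x2 = be *\<^sub>R pn + (1 / mink pm pn) *\<^sub>R pm"
    "a\<^sup>2 + b\<^sup>2 + c\<^sup>2 = 1" "proj (Won x2) = rot_axis a b c th (boost_frame pm pn rho (proj (Wim x1)))"
    "l = lambda_quat rho th a b c"
proof -
  obtain x1 x2 rho th a b c where x1: "x1 \<in> geod pm pn \<inter> horo pm" and x2: "x2 \<in> geod pm pn \<inter> horo pn"
    and "a\<^sup>2 + b\<^sup>2 + c\<^sup>2 = 1" "l = lambda_quat rho th a b c"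
    and lift: "lifts_path Sp proj
        (\<lambda>s. rot_axis a b c (s * th) (boost_frame pm pn (s * rho) (proj (Wim x1)))) (Wim x1) (Won x2)"
    using assms(1,2) unfolding lambda_length_def prod.case lambda_quat_def by (simp only: if_False) blast
  moreover have "proj (Won x2) = rot_axis a b c th (boost_frame pm pn rho (proj (Wim x1)))"
    using lift unfolding lifts_path_def by (metis atLeastAtMost_iff mult_1 order_refl zero_le_one)
  moreover obtain al where "x1 = al *\<^sub>R pm + (1 / mink pm pn) *\<^sub>R pn" "mink pm pn \<noteq> 0"
    using geod_inter_horo[OF x1 pp(1)] by blast
  moreover obtain be where "x2 = be *\<^sub>R pn + (1 / mink pm pn) *\<^sub>R pm"
    using geod_inter_horo[of x2 pn pm] x2 pp(2) by (auto simp: geod_commute mink_commute[of pn pm])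
  ultimately show ?thesis
    using that x1 x2 by blast
qed

lemma lambda_length_mink_ne_0:
  assumes "lambda_length Sp proj (pm, vim, vjm, Wom, Wim) (pn, vin, vjn, Won, Win) l"
    and "\<not> (\<exists>c>0. pn = c *\<^sub>R pm)" and "mink pm pm = 0" "mink pn pn = 0"
  shows "mink pm pn \<noteq> 0"
  by (rule lambda_lengthE[OF assms])

lemma boost_fix:
  assumes "mink y p = 0" "mink y q = 0"
  shows "boost p q rho y = y"
  using assms by (simp add: boost_def)

definition cross_pairing :: "R5 \<Rightarrow> R5 \<Rightarrow> R5 \<Rightarrow> R5 \<Rightarrow> real" where
  "cross_pairing pm pn v u = mink v u - mink v pm * mink u pn / mink pm pn"

lemma mink_horo_parallel_geod:
  assumes x1: "x1 = al *\<^sub>R pm + (1 / mink pm pn) *\<^sub>R pn" and x2: "x2 = be *\<^sub>R pn + (1 / mink pm pn) *\<^sub>R pm"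
    and "mink pm pn \<noteq> 0" "mink pm pm = 0" "mink pn pn = 0" "mink u pm = 0" "mink v pn = 0"
  shows "mink (horo_parallel pn v x2) (horo_parallel pm u x1) = cross_pairing pm pn v u"
  using assms
  by (simp add: horo_parallel_def cross_pairing_def mink_commute[of pn pm] mink_commute[of pm u]
      mink_commute[of pn u] mink_commute[of pn v] field_simps)

text \<open>The first vector of an outward frame is minus the parallel field that starts the inward
  frame, whence this sign in the rotation matrices.\<close>
definition flip_sign :: "nat \<Rightarrow> real" where
  "flip_sign i = (if i = 1 then -1 else 1)"

definition cross_pairing_lambda ::
    "R5 \<Rightarrow> R5 \<Rightarrow> (nat \<Rightarrow> R5) \<Rightarrow> (nat \<Rightarrow> R5) \<Rightarrow> quat \<Rightarrow> bool" where
  "cross_pairing_lambda pm pn u v l \<longleftrightarrow>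
     (\<exists>a b c rho th. a\<^sup>2 + b\<^sup>2 + c\<^sup>2 = 1 \<and> l = lambda_quat rho th a b c \<and>
        (\<forall>k\<in>{1, 2, 3}. \<forall>i\<in>{1, 2, 3}.
           rodr a b c th k i = - flip_sign i * cross_pairing pm pn (v i) (u k)))"

lemma lambda_length_rotation:
  assumes ll: "lambda_length Sp proj (pm, vim, vjm, Wom, Wim) (pn, vin, vjn, Won, Win) l"
    and nz: "\<not> (\<exists>c>0. pn = c *\<^sub>R pm)" and pp: "mink pm pm = 0" "mink pn pn = 0"
    and u: "horo_basis pm u" and v: "horo_basis pn v"
    and Wim: "\<forall>x\<in>horo pm. proj (Wim x) = horo_in_frame pm u x"
    and Won: "\<forall>x\<in>horo pn. proj (Won x) = horo_out_frame pn v x"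
  shows "cross_pairing_lambda pm pn u v l"
proof -
  obtain x1 x2 al be rho th a b c where mu: "mink pm pn \<noteq> 0"
    and x1: "x1 \<in> horo pm" "x1 = al *\<^sub>R pm + (1 / mink pm pn) *\<^sub>R pn"
    and x2: "x2 \<in> horo pn" "x2 = be *\<^sub>R pn + (1 / mink pm pn) *\<^sub>R pm"
    and abc: "a\<^sup>2 + b\<^sup>2 + c\<^sup>2 = 1"
    and W: "proj (Won x2) = rot_axis a b c th (boost_frame pm pn rho (proj (Wim x1)))"
    and l: "l = lambda_quat rho th a b c"
    by (rule lambda_lengthE[OF ll nz pp])
  have up: "mink (u k) pm = 0" and vp: "mink (v k) pn = 0" if "k \<in> {1, 2, 3}" for k
    using u v that unfolding horo_basis_def by auto
  define E where "E k = horo_parallel pm (u k) x1" for k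
  define V where "V i = horo_parallel pn (v i) x2" for i
  have EE: "mink (E j) (E k) = (if j = k then -1 else 0)" if "j \<in> {1, 2, 3}" "k \<in> {1, 2, 3}" for j k
    unfolding E_def by (rule horo_basis_orthonormal_at[OF u pp(1) that])
  have E_boost: "boost pm pn rho (E k) = E k" if "k \<in> {1, 2, 3}" for k
    using horo_basis_orthonormal_at(2)[OF u pp(1) that that] up[OF that] pp(1) mu
    by (intro boost_fix) (simp_all add: E_def horo_parallel_def x1(2) mink_commute[of pn pm])
  have frames: "horo_out_frame pn v x2 = rot_axis a b c th (boost_frame pm pn rho (horo_in_frame pm u x1))"
    using W Wim Won x1(1) x2(1) by simp
  have rows: "flip_sign i *\<^sub>R V i = (\<Sum>j\<in>{1, 2, 3}. rodr a b c th j i *\<^sub>R E j)"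
    if "i \<in> {1, 2, 3}" for i
    using that arg_cong[OF frames, of "\<lambda>M. M $ 1"] arg_cong[OF frames, of "\<lambda>M. M $ 2"]
      arg_cong[OF frames, of "\<lambda>M. M $ 3"] E_boost[of 1] E_boost[of 2] E_boost[of 3]
    by (auto simp: horo_out_frame_def horo_in_frame_def rot_axis_def boost_frame_def flip_sign_def
        E_def V_def Let_def add.assoc)
  have "rodr a b c th k i = - flip_sign i * cross_pairing pm pn (v i) (u k)"
    if ki: "k \<in> {1, 2, 3}" "i \<in> {1, 2, 3}" for k i
  proof -
    have "flip_sign i * cross_pairing pm pn (v i) (u k) = mink (flip_sign i *\<^sub>R V i) (E k)"
      using mink_horo_parallel_geod[OF x1(2) x2(2) mu pp up[OF ki(1)] vp[OF ki(2)]] by (simp add: V_def E_def)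
    also have "\<dots> = - rodr a b c th k i"
      using ki unfolding rows[OF ki(2)] by (auto simp: EE)
    finally show ?thesis
      by simp
  qed
  then show ?thesis
    unfolding cross_pairing_lambda_def using abc l by blast
qed

section \<open>The signed trace around an ideal triangle\<close>

lemma horo_basis_parseval:
  assumes "horo_basis p u" "mink X p = 0" "mink Y p = 0"
  shows "(\<Sum>k\<in>{1, 2, 3}. mink (u k) X * mink (u k) Y) = - mink X Y"
  using assms unfolding horo_basis_def by blast

lemma mink_double_projection:
  assumes y: "mink y p1 = 0" "mink y y = -1"
    and pp: "mink p1 p1 = 0" "mink p2 p2 = 0" "mink p3 p3 = 0"
    and m: "mink p1 p2 = m12" "mink p2 p1 = m12" "mink p1 p3 = m13" "mink p3 p1 = m13"
      "mink p2 p3 = m23" "mink p3 p2 = m23"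
    and nz: "m12 \<noteq> 0" "m13 \<noteq> 0" "m23 \<noteq> 0"
  defines "Y \<equiv> y - (mink y p2 / m12) *\<^sub>R p1"
  defines "W \<equiv> Y - (mink Y p3 / m23) *\<^sub>R p2"
  defines "Z \<equiv> y - (mink y p3 / m13) *\<^sub>R p1"
  shows "mink Z W = -1 + (m12 * m13 / m23) * (mink y p2 / m12 - mink y p3 / m13)\<^sup>2"
proof -
  have "mink p1 y = 0" "mink p2 y = mink y p2" "mink p3 y = mink y p3"
    using y(1) by (simp_all add: mink_commute[of _ y])
  then show ?thesis
    unfolding W_def Y_def Z_def by (simp add: y pp m nz field_simps power2_eq_square)
qed

lemma sum_mink_double_projection:
  assumes pp: "mink p1 p1 = 0" "mink p2 p2 = 0" "mink p3 p3 = 0"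
    and m: "mink p1 p2 = m12" "mink p2 p1 = m12" "mink p1 p3 = m13" "mink p3 p1 = m13"
      "mink p2 p3 = m23" "mink p3 p2 = m23"
    and nz: "m12 \<noteq> 0" "m13 \<noteq> 0" "m23 \<noteq> 0"
    and U1: "horo_basis p1 U1"
  defines "Y \<equiv> \<lambda>a. U1 a - (mink (U1 a) p2 / m12) *\<^sub>R p1"
  defines "W \<equiv> \<lambda>a. Y a - (mink (Y a) p3 / m23) *\<^sub>R p2"
  defines "Z \<equiv> \<lambda>a. U1 a - (mink (U1 a) p3 / m13) *\<^sub>R p1"
  shows "(\<Sum>a\<in>{1, 2, 3}. mink (Z a) (W a)) = -1"
proof -
  define w where "w = (1 / m12) *\<^sub>R p2 - (1 / m13) *\<^sub>R p3"
  have wp: "mink w p1 = 0"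
    using nz by (simp add: w_def m)
  have each: "mink (Z a) (W a) = -1 + (m12 * m13 / m23) * (mink (U1 a) w * mink (U1 a) w)"
    if "a \<in> {1, 2, 3}" for a
  proof -
    have "mink (U1 a) p1 = 0" "mink (U1 a) (U1 a) = -1"
      using U1 that unfolding horo_basis_def by auto
    then have "mink (Z a) (W a)
        = -1 + (m12 * m13 / m23) * (mink (U1 a) p2 / m12 - mink (U1 a) p3 / m13)\<^sup>2"
      unfolding Z_def W_def Y_def by (rule mink_double_projection[OF _ _ pp m nz])
    then show ?thesis
      by (simp add: w_def power2_eq_square)
  qed
  have "(\<Sum>a\<in>{1, 2, 3}. mink (Z a) (W a))
      = (\<Sum>a\<in>{1, 2, 3}. -1 + (m12 * m13 / m23) * (mink (U1 a) w * mink (U1 a) w))"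
    by (rule sum.cong) (simp_all add: each)
  also have "\<dots> = -3 + (m12 * m13 / m23) * (\<Sum>a\<in>{1, 2, 3}. mink (U1 a) w * mink (U1 a) w)"
    by (simp add: algebra_simps)
  also have "(\<Sum>a\<in>{1, 2, 3}. mink (U1 a) w * mink (U1 a) w) = - mink w w"
    by (rule horo_basis_parseval[OF U1 wp wp])
  also have "mink w w = - 2 * m23 / (m12 * m13)"
    using nz by (simp add: w_def m pp field_simps)
  finally show ?thesis
    using nz by (simp add: field_simps)
qed

lemma cross_pairing_projection:
  "cross_pairing pm pn v u = mink v (u - (mink u pn / mink pm pn) *\<^sub>R pm)"
  "cross_pairing pm pn v u = mink u (v - (mink v pm / mink pm pn) *\<^sub>R pn)"
  by (simp_all add: cross_pairing_def mink_commute[of pm v] mink_commute[of pn u] mink_commute[of u v])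

text \<open>Writing each \<open>cross_pairing\<close> as a pairing with a vector projected along a centre, the
  inner sums collapse by Parseval.\<close>
lemma signed_trace_cross_pairings:
  assumes pp: "mink p1 p1 = 0" "mink p2 p2 = 0" "mink p3 p3 = 0"
    and nz: "mink p1 p2 \<noteq> 0" "mink p1 p3 \<noteq> 0" "mink p2 p3 \<noteq> 0"
    and U1: "horo_basis p1 U1" and U2: "horo_basis p2 U2" and U3: "horo_basis p3 U3"
  shows "(\<Sum>a\<in>{1, 2, 3}. \<Sum>b\<in>{1, 2, 3}. \<Sum>c\<in>{1, 2, 3}.
      (- flip_sign a * cross_pairing p3 p1 (U1 a) (U3 b)) * (- flip_sign c * cross_pairing p3 p2 (U2 c) (U3 b))
      * (- flip_sign c * cross_pairing p1 p2 (U2 c) (U1 a)) * (- flip_sign a)) = -1"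
proof -
  define m12 m13 m23 where "m12 = mink p1 p2" and "m13 = mink p1 p3" and "m23 = mink p2 p3"
  have m: "mink p1 p2 = m12" "mink p2 p1 = m12" "mink p1 p3 = m13" "mink p3 p1 = m13"
    "mink p2 p3 = m23" "mink p3 p2 = m23"
    by (simp_all add: m12_def m13_def m23_def mink_commute)
  define X where "X b = U3 b - (mink (U3 b) p2 / m23) *\<^sub>R p3" for b
  define Y where "Y a = U1 a - (mink (U1 a) p2 / m12) *\<^sub>R p1" for a
  define W where "W a = Y a - (mink (Y a) p3 / m23) *\<^sub>R p2" for a
  define Z where "Z a = U1 a - (mink (U1 a) p3 / m13) *\<^sub>R p1" for a
  have perp: "mink (X b) p2 = 0" "mink (Y a) p2 = 0" "mink (Z a) p3 = 0" "mink (W a) p3 = 0" for a b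
    using nz by (simp_all add: X_def Y_def Z_def W_def m)
  have cross: "cross_pairing p3 p2 (U2 c) (U3 b) = mink (U2 c) (X b)"
    "cross_pairing p1 p2 (U2 c) (U1 a) = mink (U2 c) (Y a)"
    "cross_pairing p3 p1 (U1 a) (U3 b) = mink (U3 b) (Z a)" for a b c
    by (simp_all only: cross_pairing_projection(1)[of p3 p2] cross_pairing_projection(1)[of p1 p2]
        cross_pairing_projection(2)[of p3 p1] X_def Y_def Z_def m)
  have sq: "flip_sign c * flip_sign c = 1" for c
    by (simp add: flip_sign_def)
  have inner: "(\<Sum>c\<in>{1, 2, 3}. (- flip_sign c * cross_pairing p3 p2 (U2 c) (U3 b))
      * (- flip_sign c * cross_pairing p1 p2 (U2 c) (U1 a))) = - mink (U3 b) (W a)" for a b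
  proof -
    have "mink (X b) (Y a) = mink (U3 b) (W a)"
      by (simp add: X_def W_def m mink_commute[of p3 "Y a"] algebra_simps)
    then show ?thesis
      using horo_basis_parseval[OF U2 perp(1,2)] by (simp add: cross flip_sign_def)
  qed
  have "(\<Sum>b\<in>{1, 2, 3}. \<Sum>c\<in>{1, 2, 3}.
      (- flip_sign a * cross_pairing p3 p1 (U1 a) (U3 b)) * (- flip_sign c * cross_pairing p3 p2 (U2 c) (U3 b))
      * (- flip_sign c * cross_pairing p1 p2 (U2 c) (U1 a)) * (- flip_sign a))
      = (\<Sum>b\<in>{1, 2, 3}. (flip_sign a * flip_sign a) * cross_pairing p3 p1 (U1 a) (U3 b)
          * (\<Sum>c\<in>{1, 2, 3}. (- flip_sign c * cross_pairing p3 p2 (U2 c) (U3 b))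
            * (- flip_sign c * cross_pairing p1 p2 (U2 c) (U1 a))))" for a
    by (intro sum.cong refl) (simp add: sum_distrib_left algebra_simps)
  also have "\<dots> a = - (\<Sum>b\<in>{1, 2, 3}. mink (U3 b) (Z a) * mink (U3 b) (W a))" for a
    unfolding inner by (simp add: sq cross)
  also have "\<dots> a = mink (Z a) (W a)" for a
    using horo_basis_parseval[OF U3 perp(3,4)] by simp
  finally show ?thesis
    using sum_mink_double_projection[OF pp m _ _ _ U1] nz
    unfolding W_def Y_def Z_def m12_def m13_def m23_def by simp
qed

section \<open>Quaternions\<close>

definition qconj :: "quat \<Rightarrow> quat" where
  "qconj q = Quat (qre q) (- qi q) (- qj q) (- qk q)"

text \<open>Entry \<open>(j, i)\<close> of the matrix of \<open>v \<mapsto> q v (qconj q)\<close> on the imaginary quaternions, in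
  the basis \<open>i, j, k\<close> numbered \<open>1, 2, 3\<close>; for unit \<open>q\<close> this is a rotation.\<close>
definition qrot_matrix :: "quat \<Rightarrow> nat \<Rightarrow> nat \<Rightarrow> real" where
  "qrot_matrix q j i =
     (let w = qre q; x = qi q; y = qj q; z = qk q;
          u = (\<lambda>k::nat. if k = 1 then x else if k = 2 then y else z);
          K = (\<lambda>j i::nat. if j = 1 \<and> i = 2 then - z else if j = 1 \<and> i = 3 then y
                   else if j = 2 \<and> i = 1 then z else if j = 2 \<and> i = 3 then - x
                   else if j = 3 \<and> i = 1 then - y else if j = 3 \<and> i = 2 then x else 0)
      in (if j = i then w\<^sup>2 - x\<^sup>2 - y\<^sup>2 - z\<^sup>2 else 0) + 2 * w * K j i + 2 * u j * u i)"

lemma qrot_matrix_qmul: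
  assumes "j \<in> {1, 2, 3}" "i \<in> {1, 2, 3}"
  shows "(\<Sum>k\<in>{1, 2, 3}. qrot_matrix p j k * qrot_matrix q k i) = qrot_matrix (qmul p q) j i"
  using assms
  by (cases p, cases q) (auto simp: qrot_matrix_def qmul_def Let_def algebra_simps power2_eq_square)

lemma qrot_matrix_qconj:
  "j \<in> {1, 2, 3} \<Longrightarrow> i \<in> {1, 2, 3} \<Longrightarrow> qrot_matrix q j i = qrot_matrix (qconj q) i j"
  by (cases q) (auto simp: qrot_matrix_def qconj_def Let_def)

lemma qnorm2_qmul: "qnorm2 (qmul p q) = qnorm2 p * qnorm2 q"
  by (cases p, cases q) (simp add: qnorm2_def qmul_def algebra_simps power2_eq_square)

lemma qnorm2_qconj: "qnorm2 (qconj q) = qnorm2 q"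
  by (simp add: qnorm2_def qconj_def)

lemma signed_trace_qrot_matrix:
  "(\<Sum>a\<in>{1, 2, 3}. - flip_sign a * qrot_matrix q a a) = 4 * (qi q)\<^sup>2 - qnorm2 q"
  by (simp add: flip_sign_def qrot_matrix_def Let_def qnorm2_def power2_eq_square)

lemma qi_eq_0_if_signed_trace:
  assumes n: "qnorm2 s1 = 1" "qnorm2 s2 = 1" "qnorm2 s3 = 1"
    and T: "(\<Sum>a\<in>{1, 2, 3}. \<Sum>b\<in>{1, 2, 3}. \<Sum>c\<in>{1, 2, 3}.
      qrot_matrix s3 b a * qrot_matrix s2 b c * qrot_matrix s1 a c * (- flip_sign a)) = -1"
  shows "qi (qmul (qconj s3) (qmul s2 (qconj s1))) = 0"
proof -
  let ?M = "qmul s2 (qconj s1)"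
  let ?X = "qmul (qconj s3) ?M"
  have "(\<Sum>b\<in>{1, 2, 3}. \<Sum>c\<in>{1, 2, 3}.
      qrot_matrix s3 b a * qrot_matrix s2 b c * qrot_matrix s1 a c * (- flip_sign a))
      = - flip_sign a * qrot_matrix ?X a a" if a: "a \<in> {1, 2, 3}" for a
  proof -
    have "(\<Sum>b\<in>{1, 2, 3}. \<Sum>c\<in>{1, 2, 3}.
        qrot_matrix s3 b a * qrot_matrix s2 b c * qrot_matrix s1 a c * (- flip_sign a))
        = - flip_sign a * (\<Sum>b\<in>{1, 2, 3}. qrot_matrix (qconj s3) a b
            * (\<Sum>c\<in>{1, 2, 3}. qrot_matrix s2 b c * qrot_matrix (qconj s1) c a))"
      using a by (simp add: qrot_matrix_qconj[of a _ s1] qrot_matrix_qconj[of _ a s3] algebra_simps)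
    also have "\<dots> = - flip_sign a * (\<Sum>b\<in>{1, 2, 3}. qrot_matrix (qconj s3) a b * qrot_matrix ?M b a)"
      using a by (simp only: qrot_matrix_qmul cong: sum.cong)
    also have "\<dots> = - flip_sign a * qrot_matrix ?X a a"
      using a by (simp only: qrot_matrix_qmul)
    finally show ?thesis .
  qed
  then have "(\<Sum>a\<in>{1, 2, 3}. - flip_sign a * qrot_matrix ?X a a) = -1"
    using T by (metis (no_types, lifting) sum.cong)
  then have "4 * (qi ?X)\<^sup>2 - qnorm2 ?X = -1"
    by (simp only: signed_trace_qrot_matrix)
  moreover have "qnorm2 ?X = 1"
    by (simp add: qnorm2_qmul qnorm2_qconj n)
  ultimately show ?thesis
    by simp
qed

definition half_angle_quat :: "real \<Rightarrow> real \<Rightarrow> real \<Rightarrow> real \<Rightarrow> quat" where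
  "half_angle_quat a b c th = Quat (cos (th/2)) (sin (th/2) * a) (sin (th/2) * b) (sin (th/2) * c)"

lemma qnorm2_half_angle_quat:
  assumes "a\<^sup>2 + b\<^sup>2 + c\<^sup>2 = 1"
  shows "qnorm2 (half_angle_quat a b c th) = 1"
proof -
  have "qnorm2 (half_angle_quat a b c th) = (cos (th/2))\<^sup>2 + (sin (th/2))\<^sup>2 * (a\<^sup>2 + b\<^sup>2 + c\<^sup>2)"
    by (simp add: half_angle_quat_def qnorm2_def power2_eq_square algebra_simps)
  then show ?thesis
    using assms by simp
qed

lemma rodr_eq_qrot_matrix:
  assumes abc: "a\<^sup>2 + b\<^sup>2 + c\<^sup>2 = 1" and "j \<in> {1, 2, 3}" "i \<in> {1, 2, 3}"
  shows "rodr a b c th j i = qrot_matrix (half_angle_quat a b c th) j i"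
proof -
  let ?C = "cos (th/2)" and ?S = "sin (th/2)"
  have th: "th = 2 * (th/2)"
    by simp
  have cs: "?C\<^sup>2 + ?S\<^sup>2 = 1"
    by simp
  have cos_th: "cos th = ?C\<^sup>2 - ?S\<^sup>2"
    by (subst th, rule cos_double)
  have sin_th: "sin th = 2 * ?S * ?C"
    by (subst th, rule sin_double)
  have one_minus_cos: "1 - cos th = 2 * ?S\<^sup>2"
    using cos_th cs by linarith
  have "(?S * a)\<^sup>2 + (?S * b)\<^sup>2 + (?S * c)\<^sup>2 = ?S\<^sup>2 * (a\<^sup>2 + b\<^sup>2 + c\<^sup>2)"
    by (simp add: power2_eq_square algebra_simps)
  then have diag: "?C\<^sup>2 - (?S * a)\<^sup>2 - (?S * b)\<^sup>2 - (?S * c)\<^sup>2 = ?C\<^sup>2 - ?S\<^sup>2"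
    using abc by simp
  have CC: "?C * ?C = 1 - ?S * ?S"
    using cs unfolding power2_eq_square by linarith
  have aa: "a * a = 1 - b * b - c * c"
    using abc by (simp add: power2_eq_square)
  have "a * (a * (?S * ?S)) + (b * (b * (?S * ?S)) + c * (c * (?S * ?S))) = (?S * ?S) * (a\<^sup>2 + b\<^sup>2 + c\<^sup>2)"
    by (simp add: power2_eq_square algebra_simps)
  then have SS: "a * (a * (?S * ?S)) + (b * (b * (?S * ?S)) + c * (c * (?S * ?S))) = ?S * ?S"
    using abc by simp
  show ?thesis
    using assms(2,3) unfolding rodr_def qrot_matrix_def half_angle_quat_def Let_def quat.sel
    apply (auto simp: cos_th sin_th one_minus_cos diag power2_eq_square algebra_simps)
      apply (simp_all add: CC aa algebra_simps)
     apply (simp_all add: SS)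
    done
qed

text \<open>Since \<open>(a i + b j + c k) k = c i - b j + a k\<close>, a lambda length is a twisted half-angle
  quaternion.\<close>
definition twist :: "real \<Rightarrow> quat \<Rightarrow> quat" where
  "twist e s = Quat (e * qre s) (e * qk s) (- (e * qj s)) (e * qi s)"

lemma sin_abs_div_abs: "(if \<bar>t\<bar> = 0 then 1 else sin \<bar>t\<bar> / \<bar>t\<bar>) * t = (sin t :: real)"
  by (cases "t \<ge> 0") (auto simp: abs_if)

lemma lambda_quat_eq_twist:
  assumes "a\<^sup>2 + b\<^sup>2 + c\<^sup>2 = 1"
  shows "lambda_quat rho th a b c = twist (exp (rho/2)) (half_angle_quat a b c th)"
proof -
  let ?t = "th / 2"
  have arg: "qmul (Quat (1/2) 0 0 0) (qadd (Quat rho 0 0 0) (qmul (Quat th 0 0 0)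
      (qmul (Quat a b c 0) (Quat 0 0 0 1)))) = Quat (rho/2) (?t * c) (- (?t * b)) (?t * a)"
    by (simp add: qmul_def qadd_def)
  have "(?t * c)\<^sup>2 + (- (?t * b))\<^sup>2 + (?t * a)\<^sup>2 = ?t\<^sup>2 * (a\<^sup>2 + b\<^sup>2 + c\<^sup>2)"
    by (simp add: power2_eq_square algebra_simps)
  then have r: "sqrt ((?t * c)\<^sup>2 + (- (?t * b))\<^sup>2 + (?t * a)\<^sup>2) = \<bar>?t\<bar>"
    using assms by simp
  define sc where "sc = (if \<bar>?t\<bar> = 0 then 1 else sin \<bar>?t\<bar> / \<bar>?t\<bar>)"
  have sc: "sc * ?t = sin ?t"
    unfolding sc_def by (rule sin_abs_div_abs)
  have "cos (\<bar>th\<bar> / 2) = cos ?t"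
    by (metis abs_divide abs_numeral cos_abs_real)
  then show ?thesis
    unfolding lambda_quat_def arg qexp_def Let_def quat.sel r sc_def[symmetric]
    by (simp add: twist_def half_angle_quat_def sc[symmetric] algebra_simps)
qed

lemma qk_twist_product:
  assumes "qnorm2 s2 = 1" "e2 > 0"
  shows "qk (qmul (qmul (twist e1 s1) (qinv (twist e2 s2))) (twist e3 s3))
     = - (e1 * e3 / e2) * qi (qmul (qconj s3) (qmul s2 (qconj s1)))"
proof -
  have "qnorm2 (twist e2 s2) = e2 * e2 * qnorm2 s2"
    by (simp add: qnorm2_def twist_def power2_eq_square algebra_simps)
  then have "qinv (twist e2 s2) = Quat (qre s2 / e2) (- qk s2 / e2) (qj s2 / e2) (- qi s2 / e2)"
    using assms unfolding qinv_def by (simp add: twist_def field_simps)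
  then show ?thesis
    using assms(2)
    by (cases s1, cases s2, cases s3) (simp add: qmul_def qconj_def twist_def field_simps algebra_simps)
qed

lemma qk_lambda_quat_product:
  assumes n1: "a1\<^sup>2 + b1\<^sup>2 + c1\<^sup>2 = 1" and n2: "a2\<^sup>2 + b2\<^sup>2 + c2\<^sup>2 = 1"
    and n3: "a3\<^sup>2 + b3\<^sup>2 + c3\<^sup>2 = 1"
    and T: "(\<Sum>a\<in>{1, 2, 3}. \<Sum>b\<in>{1, 2, 3}. \<Sum>c\<in>{1, 2, 3}.
      rodr a3 b3 c3 t3 b a * rodr a2 b2 c2 t2 b c * rodr a1 b1 c1 t1 a c * (- flip_sign a)) = -1"
  shows "qk (qmul (qmul (lambda_quat r1 t1 a1 b1 c1) (qinv (lambda_quat r2 t2 a2 b2 c2)))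
    (lambda_quat r3 t3 a3 b3 c3)) = 0"
proof -
  define s1 s2 s3 where "s1 = half_angle_quat a1 b1 c1 t1" and "s2 = half_angle_quat a2 b2 c2 t2"
    and "s3 = half_angle_quat a3 b3 c3 t3"
  have "(\<Sum>a\<in>{1, 2, 3}. \<Sum>b\<in>{1, 2, 3}. \<Sum>c\<in>{1, 2, 3}.
      qrot_matrix s3 b a * qrot_matrix s2 b c * qrot_matrix s1 a c * (- flip_sign a)) = -1"
    using T unfolding s1_def s2_def s3_def
    by (simp only: rodr_eq_qrot_matrix[OF n1] rodr_eq_qrot_matrix[OF n2] rodr_eq_qrot_matrix[OF n3]
        cong: sum.cong)
  then have "qi (qmul (qconj s3) (qmul s2 (qconj s1))) = 0"
    using qi_eq_0_if_signed_trace qnorm2_half_angle_quat n1 n2 n3 unfolding s1_def s2_def s3_def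
    by blast
  then show ?thesis
    unfolding lambda_quat_eq_twist[OF n1] lambda_quat_eq_twist[OF n2] lambda_quat_eq_twist[OF n3]
      s1_def[symmetric] s2_def[symmetric] s3_def[symmetric]
    by (simp add: qk_twist_product qnorm2_half_angle_quat[OF n2] s2_def)
qed

lemma qk_cross_pairing_lambda_product:
  assumes pp: "mink p1 p1 = 0" "mink p2 p2 = 0" "mink p3 p3 = 0"
    and m: "mink p1 p2 \<noteq> 0" "mink p1 p3 \<noteq> 0" "mink p2 p3 \<noteq> 0"
    and U: "horo_basis p1 U1" "horo_basis p2 U2" "horo_basis p3 U3"
    and "cross_pairing_lambda p1 p2 U1 U2 l12" "cross_pairing_lambda p3 p2 U3 U2 l32"
      "cross_pairing_lambda p3 p1 U3 U1 l31"
  shows "qk (qmul (qmul l12 (qinv l32)) l31) = 0"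
proof -
  obtain a1 b1 c1 r1 t1 where R12: "a1\<^sup>2 + b1\<^sup>2 + c1\<^sup>2 = 1" "l12 = lambda_quat r1 t1 a1 b1 c1"
    "\<And>k i. k \<in> {1, 2, 3} \<Longrightarrow> i \<in> {1, 2, 3} \<Longrightarrow>
       rodr a1 b1 c1 t1 k i = - flip_sign i * cross_pairing p1 p2 (U2 i) (U1 k)"
    using assms(10) unfolding cross_pairing_lambda_def by blast
  obtain a2 b2 c2 r2 t2 where R32: "a2\<^sup>2 + b2\<^sup>2 + c2\<^sup>2 = 1" "l32 = lambda_quat r2 t2 a2 b2 c2"
    "\<And>k i. k \<in> {1, 2, 3} \<Longrightarrow> i \<in> {1, 2, 3} \<Longrightarrow>
       rodr a2 b2 c2 t2 k i = - flip_sign i * cross_pairing p3 p2 (U2 i) (U3 k)"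
    using assms(11) unfolding cross_pairing_lambda_def by blast
  obtain a3 b3 c3 r3 t3 where R31: "a3\<^sup>2 + b3\<^sup>2 + c3\<^sup>2 = 1" "l31 = lambda_quat r3 t3 a3 b3 c3"
    "\<And>k i. k \<in> {1, 2, 3} \<Longrightarrow> i \<in> {1, 2, 3} \<Longrightarrow>
       rodr a3 b3 c3 t3 k i = - flip_sign i * cross_pairing p3 p1 (U1 i) (U3 k)"
    using assms(12) unfolding cross_pairing_lambda_def by blast
  have "(\<Sum>a\<in>{1, 2, 3}. \<Sum>b\<in>{1, 2, 3}. \<Sum>c\<in>{1, 2, 3}.
      rodr a3 b3 c3 t3 b a * rodr a2 b2 c2 t2 b c * rodr a1 b1 c1 t1 a c * (- flip_sign a)) = -1"
    using signed_trace_cross_pairings[OF pp m U] by (simp only: R12(3) R32(3) R31(3) cong: sum.cong)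
  then show ?thesis
    unfolding R12(2) R32(2) R31(2) by (rule qk_lambda_quat_product[OF R12(1) R32(1) R31(1)])
qed

theorem proposition1p8:
  fixes Sp :: "'g::topological_space set" and proj :: "'g \<Rightarrow> frame"
    and D1 D2 D3 :: "'g sdhoro" and l12 l32 l31 :: quat
  assumes "spin_cover Sp proj"
    and "spin_dec_horo Sp proj D1" and "spin_dec_horo Sp proj D2" and "spin_dec_horo Sp proj D3"
    and "lambda_length Sp proj D1 D2 l12"
    and "lambda_length Sp proj D3 D2 l32"
    and "lambda_length Sp proj D3 D1 l31"
    and "l32 \<noteq> qzero"
  shows "qmul (qmul l12 (qinv l32)) l31 \<in> qV"
proof (cases "l12 = qzero \<or> l31 = qzero")
  case True
  then show ?thesis
    by (auto simp: qV_def qzero_def qmul_def)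
next
  case False
  obtain p1 vi1 vj1 Wo1 Wi1 p2 vi2 vj2 Wo2 Wi2 p3 vi3 vj3 Wo3 Wi3 where
    D: "D1 = (p1, vi1, vj1, Wo1, Wi1)" "D2 = (p2, vi2, vj2, Wo2, Wi2)" "D3 = (p3, vi3, vj3, Wo3, Wi3)"
    by (metis prod.exhaust)
  note sd = assms(2-4)[unfolded D] and L = assms(5-7)[unfolded D]
  have pp: "mink p1 p1 = 0" "mink p2 p2 = 0" "mink p3 p3 = 0"
    using sd unfolding spin_dec_horo_def future_lightlike_def by simp_all
  have nz: "\<not> (\<exists>c>0. p2 = c *\<^sub>R p1)" "\<not> (\<exists>c>0. p2 = c *\<^sub>R p3)" "\<not> (\<exists>c>0. p1 = c *\<^sub>R p3)"
    using lambda_length_same_centre[OF L(1)] lambda_length_same_centre[OF L(2)]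
      lambda_length_same_centre[OF L(3)] False assms(8) by blast+
  have m: "mink p1 p2 \<noteq> 0" "mink p1 p3 \<noteq> 0" "mink p2 p3 \<noteq> 0"
    using lambda_length_mink_ne_0[OF L(1) nz(1) pp(1,2)] lambda_length_mink_ne_0[OF L(3) nz(3) pp(3,1)]
      lambda_length_mink_ne_0[OF L(2) nz(2) pp(3,2)] by (simp_all add: mink_commute)
  obtain U1 U2 U3 where
    U1: "horo_basis p1 U1" "\<forall>x\<in>horo p1. proj (Wi1 x) = horo_in_frame p1 U1 x"
      "\<forall>x\<in>horo p1. proj (Wo1 x) = horo_out_frame p1 U1 x" and
    U2: "horo_basis p2 U2" "\<forall>x\<in>horo p2. proj (Wo2 x) = horo_out_frame p2 U2 x" and
    U3: "horo_basis p3 U3" "\<forall>x\<in>horo p3. proj (Wi3 x) = horo_in_frame p3 U3 x"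
    by (metis spin_dec_horo_frames[OF sd(1)] spin_dec_horo_frames[OF sd(2)] spin_dec_horo_frames[OF sd(3)])
  have "qk (qmul (qmul l12 (qinv l32)) l31) = 0"
    using lambda_length_rotation[OF L(1) nz(1) pp(1,2) U1(1) U2(1) U1(2) U2(2)]
      lambda_length_rotation[OF L(2) nz(2) pp(3,2) U3(1) U2(1) U3(2) U2(2)]
      lambda_length_rotation[OF L(3) nz(3) pp(3,1) U3(1) U1(1) U3(2) U1(3)]
    by (rule qk_cross_pairing_lambda_product[OF pp m U1(1) U2(1) U3(1)])
  then show ?thesis
    by (simp add: qV_def)
qed

end
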